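(* Let $\mathcal{D}\subseteq\mathbb{C}$ and let $F:\mathcal{D}\rightarrow M_{n\times n}(\mathbb{C})$ be defined by $F(x)=\sum_{k=0}^{p}A_k x^k$, where $A_k\in M_{n\times n}(\mathbb{C})$ for $k=0,1,\dots,p$. Let $\mathcal{Z}(\mathcal{D})=\{x\in\mathcal{D} : F(x) \text{ has a repeated eigenvalue}\}$. Then either $\mathcal{Z}(\mathcal{D})=\mathcal{D}$ or $\mathcal{Z}(\mathcal{D})$ is finite.
   Context: $M_{n\times n}(\mathbb{C})$ denotes the set of $n\times n$ complex matrices. A matrix has a repeated eigenvalue if some eigenvalue has algebraic multiplicity at least $2$. *)

theory Defs
  imports "Jordan_Normal_Form.Jordan_Normal_Form"
begin

definition mat_poly_eval :: "nat \<Rightarrow> nat \<Rightarrow> (nat \<Rightarrow> complex mat) \<Rightarrow> complex \<Rightarrow> complex mat" where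
  "mat_poly_eval n p A x = mat n n (\<lambda>(i,j). \<Sum>k = 0..p. A k $$ (i,j) * x ^ k)"

definition has_repeated_eigenvalue :: "complex mat \<Rightarrow> bool" where
  "has_repeated_eigenvalue M \<longleftrightarrow> (\<exists>a. order a (char_poly M) \<ge> 2)"

end

theory Submission
  imports
    Defs
    "Subresultants.Subresultant_Gcd"
    "HOL-Computational_Algebra.Fundamental_Theorem_Algebra"
    "HOL-Computational_Algebra.Field_as_Ring"
begin

text \<open>The characteristic polynomial of F(x) is the specialisation at x of the
  characteristic polynomial P of the matrix F viewed over the ring C[x]. Since P is monic of
  degree n, specialisation commutes with taking resultants, so the discriminant-like quantity
  res(P_x, P_x') is the value at x of the single polynomial R = res(P, P').
  Over C, P_x has a repeated root iff it shares a root with its derivative, iff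
  res(P_x, P_x') = 0. Hence Z is the set of points of D where R vanishes: all of D if R = 0,
  and finite otherwise.\<close>

lemma repeated_root_iff_common_root_pderiv:
  fixes f :: "'a::{field_char_0} poly"
  assumes "f \<noteq> 0"
  shows "(\<exists>a. order a f \<ge> 2) \<longleftrightarrow> (\<exists>a. poly f a = 0 \<and> poly (pderiv f) a = 0)"
proof -
  have "order a f \<ge> 2 \<longleftrightarrow> \<not> (order a f = 0 \<or> order a f = 1)" for a
    by linarith
  then have "(\<exists>a. order a f \<ge> 2) \<longleftrightarrow> \<not> rsquarefree f"
    using assms by (simp add: rsquarefree_def)
  then show ?thesis
    by (simp add: rsquarefree_roots)
qed

lemma common_root_iff_degree_gcd:
  fixes f g :: "complex poly"
  assumes "f \<noteq> 0"
  shows "(\<exists>a. poly f a = 0 \<and> poly g a = 0) \<longleftrightarrow> degree (gcd f g) \<noteq> 0"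
proof
  assume "\<exists>a. poly f a = 0 \<and> poly g a = 0"
  then obtain a where "poly f a = 0" "poly g a = 0"
    by blast
  then have "[:-a, 1:] dvd gcd f g"
    by (simp add: poly_eq_0_iff_dvd)
  moreover have "gcd f g \<noteq> 0"
    using assms by simp
  ultimately have "degree [:-a, 1:] \<le> degree (gcd f g)"
    by (rule dvd_imp_degree_le)
  then show "degree (gcd f g) \<noteq> 0"
    by simp
next
  assume "degree (gcd f g) \<noteq> 0"
  then have "\<not> constant (poly (gcd f g))"
    by (simp add: constant_degree)
  then obtain a where "poly (gcd f g) a = 0"
    using fundamental_theorem_of_algebra by blast
  then have "[:-a, 1:] dvd f" "[:-a, 1:] dvd g"
    by (auto simp: poly_eq_0_iff_dvd intro: dvd_trans)
  then show "\<exists>a. poly f a = 0 \<and> poly g a = 0"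
    by (auto simp: poly_eq_0_iff_dvd)
qed

lemma resultant_pderiv_eq_0_iff_repeated_root:
  fixes f :: "complex poly"
  assumes "f \<noteq> 0"
  shows "resultant f (pderiv f) = 0 \<longleftrightarrow> (\<exists>a. order a f \<ge> 2)"
  using assms
  by (simp add: resultant_0_gcd common_root_iff_degree_gcd repeated_root_iff_common_root_pderiv)

lemma poly_resultant_pderiv:
  fixes P :: "'a::{field_char_0} poly poly"
  assumes "degree (map_poly (\<lambda>c. poly c x) P) = degree P"
  shows "poly (resultant P (pderiv P)) x =
    resultant (map_poly (\<lambda>c. poly c x) P) (pderiv (map_poly (\<lambda>c. poly c x) P))"
proof -
  have "degree (map_poly (\<lambda>c. poly c x) (pderiv P)) = degree (pderiv P)"
    using assms by (simp add: poly_hom.map_poly_pderiv degree_pderiv)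
  with assms have "poly (resultant P (pderiv P)) x =
      resultant (map_poly (\<lambda>c. poly c x) P) (map_poly (\<lambda>c. poly c x) (pderiv P))"
    by (simp add: poly_hom.resultant_map_poly)
  then show ?thesis
    by (simp only: poly_hom.map_poly_pderiv)
qed

definition mat_poly :: "nat \<Rightarrow> nat \<Rightarrow> (nat \<Rightarrow> complex mat) \<Rightarrow> complex poly mat" where
  "mat_poly n p A = mat n n (\<lambda>(i, j). \<Sum>k = 0..p. monom (A k $$ (i, j)) k)"

lemma mat_poly_eval_eq_map_mat:
  "mat_poly_eval n p A x = map_mat (\<lambda>c. poly c x) (mat_poly n p A)"
  by (rule eq_matI) (auto simp: mat_poly_eval_def mat_poly_def poly_sum poly_monom)

lemma repeated_eigenvalue_map_mat_iff:
  fixes N :: "complex poly mat"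
  assumes N: "N \<in> carrier_mat n n"
  shows "has_repeated_eigenvalue (map_mat (\<lambda>c. poly c x) N) \<longleftrightarrow>
    poly (resultant (char_poly N) (pderiv (char_poly N))) x = 0"
proof -
  let ?P = "char_poly N"
  let ?Px = "map_poly (\<lambda>c. poly c x) ?P"
  have Nx: "map_mat (\<lambda>c. poly c x) N \<in> carrier_mat n n"
    using N by simp
  have Px: "char_poly (map_mat (\<lambda>c. poly c x) N) = ?Px"
    using N by (rule poly_hom.char_poly_hom)
  have "monic ?Px" "degree ?Px = n"
    using degree_monic_char_poly[OF Nx] unfolding Px by auto
  then have "?Px \<noteq> 0"
    by (metis leading_coeff_0_iff zero_neq_one)
  moreover have "degree ?Px = degree ?P"
    using \<open>degree ?Px = n\<close> degree_monic_char_poly[OF N] by simp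
  ultimately show ?thesis
    by (simp add: has_repeated_eigenvalue_def Px poly_resultant_pderiv
        resultant_pderiv_eq_0_iff_repeated_root)
qed

theorem theorem3p3:
  fixes n p :: nat and A :: "nat \<Rightarrow> complex mat" and D :: "complex set"
  assumes "\<And>k. k \<le> p \<Longrightarrow> A k \<in> carrier_mat n n"
  defines "Z \<equiv> {x \<in> D. has_repeated_eigenvalue (mat_poly_eval n p A x)}"
  shows "Z = D \<or> finite Z"
proof -
  let ?P = "char_poly (mat_poly n p A)"
  define R where "R = resultant ?P (pderiv ?P)"
  have "mat_poly n p A \<in> carrier_mat n n"
    by (simp add: mat_poly_def)
  then have Z_eq: "Z = {x \<in> D. poly R x = 0}"
    by (simp add: Z_def R_def mat_poly_eval_eq_map_mat repeated_eigenvalue_map_mat_iff)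
  show ?thesis
  proof (cases "R = 0")
    case True
    then show ?thesis
      by (simp add: Z_eq)
  next
    case False
    then show ?thesis
      unfolding Z_eq using poly_roots_finite[OF False] by (auto elim: finite_subset[rotated])
  qed
qed

end
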